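(* Let $(B_k,\delta_k)_{k\ge1}$ be a sequence with $\delta_k\in(0,1/4)$, $B_k\ge1$ and $B_k/\log(\delta_k^{-1})\to\infty$. Then \[ d_{B_k;\delta_k}(e^{-x})\ge\big(\tfrac12+o(1)\big)\sqrt{B_k\log\big((2\delta_k)^{-1}\big)}\qquad(k\to\infty). \]
   Context: For real $B\ge1$, $\delta\in(0,1)$ and a function $f:[0,B]\to\mathbb{R}$, $d_{B;\delta}(f)$ denotes the minimum degree of a non-constant real polynomial $p$ satisfying $\sup_{x\in[0,B]}|p(x)-f(x)|<\delta$. Logarithms are natural. *)

theory Defs
  imports "HOL-Analysis.Analysis" "HOL-Computational_Algebra.Polynomial"
begin

definition approx_degree :: "real \<Rightarrow> real \<Rightarrow> (real \<Rightarrow> real) \<Rightarrow> nat" where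
  "approx_degree B \<delta> f =
     (LEAST n. \<exists>p :: real poly. degree p = n \<and> 0 < degree p \<and>
        (SUP x\<in>{0..B}. \<bar>poly p x - f x\<bar>) < \<delta>)"

end

theory Submission
  imports Defs
begin

text \<open>Let \<open>p\<close> of degree \<open>n\<close> approximate \<open>exp (-x)\<close> within \<open>\<delta>\<close> on \<open>[0, B]\<close> and put
  \<open>L = ln (1/\<delta>)\<close>. On \<open>[L, B]\<close> the target is at most \<open>\<delta>\<close>, so \<open>p - \<delta>/2\<close> is bounded by
  \<open>3\<delta>/2\<close> there, while \<open>p 0 > 1 - \<delta>\<close>. Mapping \<open>[L, B]\<close> affinely onto \<open>[-1, 1]\<close>, the point
  \<open>0\<close> goes to \<open>(B + L)/(B - L) = cosh u\<close>, and the extremal growth of Chebyshev polynomials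
  outside \<open>[-1, 1]\<close> gives \<open>1 - 3\<delta>/2 < 3\<delta>/2 \<cdot> cosh (n u)\<close>. Hence
  \<open>2 n u \<ge> L + ln (1/(2\<delta>)) \<ge> 2 sqrt (L \<cdot> ln (1/(2\<delta>)))\<close>, while \<open>u \<le> 2 sqrt (L / (B - L))\<close>;
  so \<open>n \<ge> sqrt ((B - L) \<cdot> ln (1/(2\<delta>))) / 2\<close>, which is the claim since \<open>L = o(B)\<close>.\<close>

fun chebyshev :: "nat \<Rightarrow> real poly" where
  "chebyshev 0 = 1"
| "chebyshev (Suc 0) = [:0, 1:]"
| "chebyshev (Suc (Suc n)) = smult 2 [:0, 1:] * chebyshev (Suc n) - chebyshev n"

lemma degree_chebyshev_le: "degree (chebyshev n) \<le> n"
proof (induction n rule: chebyshev.induct)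
  case (3 n)
  have "degree (smult 2 [:0, 1:] * chebyshev (Suc n)) \<le> Suc (Suc n)"
    by (rule order.trans[OF degree_mult_le]) (use 3 in auto)
  moreover have "degree (chebyshev n) \<le> Suc (Suc n)"
    using 3 by simp
  ultimately show ?case
    by (simp add: degree_diff_le)
qed auto

lemma poly_chebyshev_cos: "poly (chebyshev n) (cos x) = cos (real n * x)"
proof (induction n rule: chebyshev.induct)
  case (3 n)
  define a where "a = real (Suc n) * x"
  have "poly (chebyshev (Suc (Suc n))) (cos x) = 2 * cos x * cos a - cos (a - x)"
    using 3 by (simp add: a_def algebra_simps)
  also have "\<dots> = cos (a + x)"
    by (simp add: cos_add cos_diff algebra_simps)
  finally show ?case
    by (simp add: a_def algebra_simps)
qed auto

lemma poly_chebyshev_cosh: "poly (chebyshev n) (cosh x) = cosh (real n * x)"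
proof (induction n rule: chebyshev.induct)
  case (3 n)
  define a where "a = real (Suc n) * x"
  have "poly (chebyshev (Suc (Suc n))) (cosh x) = 2 * cosh x * cosh a - cosh (a - x)"
    using 3 by (simp add: a_def algebra_simps)
  also have "\<dots> = cosh (a + x)"
    by (simp add: cosh_add cosh_diff algebra_simps)
  finally show ?case
    by (simp add: a_def algebra_simps)
qed auto

definition lagrange_basis :: "(nat \<Rightarrow> real) \<Rightarrow> nat \<Rightarrow> nat \<Rightarrow> real \<Rightarrow> real" where
  "lagrange_basis c n j y = (\<Prod>i\<in>{..n}-{j}. (y - c i) / (c j - c i))"

lemma lagrange_basis_at_node:
  assumes "inj_on c {..n}" "j \<le> n" "k \<le> n"
  shows "lagrange_basis c n j (c k) = (if k = j then 1 else 0)"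
proof (cases "k = j")
  case True
  have "c j - c i \<noteq> 0" if "i \<in> {..n}-{j}" for i
    using assms that by (auto dest: inj_onD)
  then show ?thesis
    using True unfolding lagrange_basis_def by (intro trans[OF prod.neutral]) auto
next
  case False
  then have "k \<in> {..n}-{j}"
    using assms by auto
  then show ?thesis
    using False unfolding lagrange_basis_def by (subst prod_zero) (auto intro: bexI[of _ k])
qed

lemma poly_eq_lagrange_interpolation:
  fixes q :: "real poly"
  assumes inj: "inj_on c {..n}" and deg: "degree q \<le> n"
  shows "poly q y = (\<Sum>j\<le>n. poly q (c j) * lagrange_basis c n j y)"
proof -
  define L where "L j = smult (\<Prod>i\<in>{..n}-{j}. 1 / (c j - c i)) (\<Prod>i\<in>{..n}-{j}. [:- c i, 1:])"
    for j
  define Q where "Q = (\<Sum>j\<le>n. smult (poly q (c j)) (L j))"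
  have poly_L: "poly (L j) y = lagrange_basis c n j y" for j y
    by (simp add: L_def lagrange_basis_def poly_prod prod.distrib[symmetric] divide_simps)
  have "degree (L j) \<le> n" if "j \<le> n" for j
  proof -
    have "degree (\<Prod>i\<in>{..n}-{j}. [:- c i, 1:]) \<le> (\<Sum>i\<in>{..n}-{j}. degree [:- c i, 1:])"
      using degree_prod_sum_le[of "{..n}-{j}" "\<lambda>i. [:- c i, 1:]"] by (simp add: o_def)
    also have "\<dots> = n"
      using that by simp
    finally show ?thesis
      unfolding L_def using degree_smult_le order.trans by blast
  qed
  then have deg_Q: "degree Q \<le> n"
    unfolding Q_def by (intro degree_sum_le) (use degree_smult_le order.trans in auto)
  have "q = Q"
  proof (rule poly_eqI_degree[where A = "c ` {..n}"])
    fix x assume "x \<in> c ` {..n}"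
    then obtain k where k: "k \<le> n" "x = c k"
      by auto
    then show "poly q x = poly Q x"
      unfolding Q_def using inj
      by (simp add: poly_sum poly_L lagrange_basis_at_node if_distrib cong: if_cong)
  next
    have "card (c ` {..n}) = Suc n"
      using inj by (simp add: card_image)
    then show "degree q < card (c ` {..n})" "degree Q < card (c ` {..n})"
      using deg deg_Q by auto
  qed
  then have "poly q y = poly Q y"
    by simp
  also have "\<dots> = (\<Sum>j\<le>n. poly q (c j) * lagrange_basis c n j y)"
    unfolding Q_def poly_sum by (simp add: poly_L)
  finally show ?thesis .
qed

lemma lagrange_basis_alternating_sign:
  assumes dec: "\<And>i k. i < k \<Longrightarrow> k \<le> n \<Longrightarrow> c k < c i"
    and y: "\<And>i. i \<le> n \<Longrightarrow> c i \<le> y" and j: "j \<le> n"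
  shows "0 \<le> (-1) ^ j * lagrange_basis c n j y"
proof -
  define f where "f i = (y - c i) / (c j - c i)" for i
  have split: "{..n}-{j} = {..<j} \<union> {j<..n}"
    using j by auto
  have "lagrange_basis c n j y = prod f {..<j} * prod f {j<..n}"
    unfolding lagrange_basis_def f_def[symmetric] split by (subst prod.union_disjoint) auto
  also have "prod f {..<j} = (-1) ^ j * (\<Prod>i<j. - f i)"
    by (simp add: prod_uminus)
  finally have "(-1) ^ j * lagrange_basis c n j y = (\<Prod>i<j. - f i) * prod f {j<..n}"
    by simp
  moreover have "0 \<le> (\<Prod>i<j. - f i)"
  proof (rule prod_nonneg)
    fix i assume "i \<in> {..<j}"
    then show "0 \<le> - f i"
      using dec[of i j] y[of i] j by (simp add: f_def divide_simps)
  qed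
  moreover have "0 \<le> prod f {j<..n}"
  proof (rule prod_nonneg)
    fix i assume "i \<in> {j<..n}"
    then show "0 \<le> f i"
      using dec[of j i] y[of i] by (simp add: f_def divide_simps)
  qed
  ultimately show ?thesis
    by simp
qed

lemma abs_poly_le_chebyshev:
  fixes q :: "real poly"
  assumes deg: "degree q \<le> n" and y: "1 \<le> y"
    and bound: "\<And>x. -1 \<le> x \<Longrightarrow> x \<le> 1 \<Longrightarrow> \<bar>poly q x\<bar> \<le> M"
  shows "\<bar>poly q y\<bar> \<le> M * poly (chebyshev n) y"
proof -
  \<comment> \<open>Interpolate at the extremal points of \<open>chebyshev n\<close>, where it takes the values \<open>\<plusminus>1\<close>;
    beyond the nodes the Lagrange weights alternate in sign like those values.\<close>
  define c where "c j = cos (real j * pi / real n)" for j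
  define l where "l j = lagrange_basis c n j y" for j
  have dec: "c k < c i" if "i < k" "k \<le> n" for i k
  proof -
    have n: "0 < real n"
      using that by simp
    have "real i * pi < real k * pi" "real k * pi \<le> real n * pi"
      using that by auto
    then have "real i * pi / real n < real k * pi / real n" "real k * pi / real n \<le> pi"
      using n by (auto simp: divide_strict_right_mono pos_divide_le_eq mult.commute)
    then show ?thesis
      unfolding c_def by (intro cos_monotone_0_pi) auto
  qed
  have inj: "inj_on c {..n}"
  proof (rule inj_onI)
    fix i k assume "i \<in> {..n}" "k \<in> {..n}" "c i = c k"
    then show "i = k"
      using dec[of i k] dec[of k i] by (cases i k rule: linorder_cases) auto
  qed
  have chebyshev_node: "poly (chebyshev n) (c j) = (-1) ^ j" if "j \<le> n" for j
  proof (cases "n = 0")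
    case False
    then have "poly (chebyshev n) (c j) = cos (real j * pi)"
      by (simp add: c_def poly_chebyshev_cos)
    then show ?thesis
      by simp
  qed (use that in \<open>simp add: c_def\<close>)
  have abs_l: "\<bar>l j\<bar> = (-1) ^ j * l j" if "j \<le> n" for j
  proof -
    have "c i \<le> y" for i
      using cos_le_one y unfolding c_def by (rule order.trans)
    then have "0 \<le> (-1) ^ j * l j"
      unfolding l_def using dec that by (intro lagrange_basis_alternating_sign)
    then show ?thesis
      by (cases "even j") auto
  qed
  have "\<bar>poly q y\<bar> = \<bar>\<Sum>j\<le>n. poly q (c j) * l j\<bar>"
    unfolding l_def by (subst poly_eq_lagrange_interpolation[OF inj deg, of y]) (rule refl)
  also have "\<dots> \<le> (\<Sum>j\<le>n. \<bar>poly q (c j)\<bar> * \<bar>l j\<bar>)"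
    unfolding abs_mult[symmetric] by (rule sum_abs)
  also have "\<dots> \<le> (\<Sum>j\<le>n. M * \<bar>l j\<bar>)"
    unfolding c_def by (intro sum_mono mult_right_mono bound) auto
  also have "\<dots> = M * (\<Sum>j\<le>n. poly (chebyshev n) (c j) * l j)"
    by (simp add: sum_distrib_left abs_l chebyshev_node)
  also have "\<dots> = M * poly (chebyshev n) y"
    unfolding l_def by (subst poly_eq_lagrange_interpolation[OF inj degree_chebyshev_le, of y]) (rule refl)
  finally show ?thesis .
qed

lemma cosh_ge_1_plus_square_div_2: "1 + x^2 / 2 \<le> cosh (x :: real)"
proof -
  let ?f = "\<lambda>n. if even n then x ^ n /\<^sub>R fact n else 0"
  have sums: "?f sums cosh x"
    by (rule cosh_converges)
  have "sum ?f {..<3} \<le> suminf ?f"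
    using sums by (intro sum_le_suminf) (auto simp: sums_summable)
  moreover have "sum ?f {..<3} = 1 + x^2 / 2"
    by (simp add: eval_nat_numeral)
  ultimately show ?thesis
    using sums_unique[OF sums] by simp
qed

lemma arcosh_1_plus_square_div_2_le:
  fixes s :: real
  assumes "0 \<le> s"
  shows "arcosh (1 + s^2 / 2) \<le> s"
proof -
  have "1 \<le> 1 + s^2 / 2"
    by simp
  then have "cosh (arcosh (1 + s^2 / 2)) \<le> cosh s"
    using cosh_ge_1_plus_square_div_2[of s] by simp
  then show ?thesis
    using assms arcosh_nonneg_real[OF \<open>1 \<le> 1 + s^2 / 2\<close>] cosh_real_nonneg_le_iff by blast
qed

lemma add_inverse_mono:
  fixes x y :: real
  assumes "1 \<le> x" "x \<le> y"
  shows "x + 1 / x \<le> y + 1 / y"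
proof -
  have "y + 1 / y - (x + 1 / x) = (y - x) * (x * y - 1) / (x * y)"
    using assms by (simp add: field_simps)
  also have "\<dots> \<ge> 0"
    using assms mult_mono[of 1 x 1 y] by simp
  finally show ?thesis
    by simp
qed

lemma ln_le_of_cosh_lower_bound:
  fixes \<delta> t :: real
  assumes \<delta>: "0 < \<delta>" "\<delta> < 1/4" and t: "0 \<le> t"
    and cosh: "1 - 3 * \<delta> / 2 < 3 * \<delta> / 2 * cosh t"
  shows "ln (1 / \<delta>) + ln (1 / (2 * \<delta>)) \<le> 2 * t"
proof -
  define w where "w = exp t"
  define a where "a = 17 / (24 * \<delta>)"
  have "4 / (3 * \<delta>) - 2 = (1 - 3 * \<delta> / 2) * (4 / (3 * \<delta>))"
    using \<delta> by (simp add: field_simps)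
  also have "\<dots> < (3 * \<delta> / 2 * cosh t) * (4 / (3 * \<delta>))"
    using cosh \<delta> by (intro mult_strict_right_mono) auto
  also have "\<dots> = w + 1 / w"
    using \<delta> by (simp add: w_def cosh_def exp_minus field_simps)
  finally have w_lower: "4 / (3 * \<delta>) - 2 < w + 1 / w" .
  have "a \<le> w"
  proof (rule ccontr)
    assume "\<not> a \<le> w"
    then have "w + 1 / w \<le> a + 1 / a"
      using t by (intro add_inverse_mono) (auto simp: w_def)
    moreover have "1 / a \<le> 6 / 17" "a + 6 / 17 \<le> 4 / (3 * \<delta>) - 2"
      using \<delta> by (simp_all add: a_def field_simps)
    ultimately show False
      using w_lower by linarith
  qed
  then have "ln a \<le> ln w"
    using \<delta> by (intro ln_mono) (auto simp: a_def)
  then have "ln a \<le> t"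
    by (simp add: w_def)
  \<comment> \<open>17/24 is a rational stand-in for \<open>1/sqrt 2\<close>: it is small enough for the
    contradiction above and still satisfies \<open>(17/24)^2 \<ge> 1/2\<close>.\<close>
  moreover have "- ln 2 \<le> 2 * ln (17 / 24 :: real)"
  proof -
    have "ln (1 / 2 :: real) \<le> ln ((17 / 24) ^ 2)"
      by (subst ln_le_cancel_iff) (auto simp: power2_eq_square)
    then show ?thesis
      by (simp add: ln_div ln_realpow)
  qed
  ultimately show ?thesis
    using \<delta> by (simp add: a_def ln_div ln_mult)
qed

lemma ln_le_degree_mult_arcosh:
  fixes p :: "real poly" and \<delta> B :: real
  defines "L \<equiv> ln (1 / \<delta>)"
  assumes \<delta>: "0 < \<delta>" "\<delta> < 1/4" and LB: "L < B"
    and approx: "\<And>x. 0 \<le> x \<Longrightarrow> x \<le> B \<Longrightarrow> \<bar>poly p x - exp (- x)\<bar> < \<delta>"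
  shows "L + ln (1 / (2 * \<delta>)) \<le> 2 * real (degree p) * arcosh ((B + L) / (B - L))"
proof -
  define m where "m = (B + L) / 2"
  define h where "h = (B - L) / 2"
  have L: "0 < L" "exp (- L) = \<delta>"
    using \<delta> by (simp_all add: L_def ln_div)
  have h: "0 < h"
    using LB by (simp add: h_def)
  have mh: "m - h = L" "m + h = B"
    by (simp_all add: m_def h_def field_simps)
  \<comment> \<open>\<open>q\<close> is \<open>p - \<delta>/2\<close> with \<open>[L, B]\<close> moved to \<open>[-1, 1]\<close> and \<open>0\<close> moved to \<open>y0\<close>.\<close>
  define q where "q = pcompose p [:m, - h:] - [:\<delta> / 2:]"
  have poly_q: "poly q y = poly p (m - h * y) - \<delta> / 2" for y
    by (simp add: q_def poly_pcompose algebra_simps)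
  have "degree (pcompose p [:m, - h:]) \<le> degree p"
    using degree_pcompose_le[of p "[:m, - h:]"] h by simp
  then have deg_q: "degree q \<le> degree p"
    unfolding q_def by (intro degree_diff_le) simp_all
  have q_bound: "\<bar>poly q y\<bar> \<le> 3 * \<delta> / 2" if "-1 \<le> y" "y \<le> 1" for y
  proof -
    have "- h \<le> h * y" "h * y \<le> h"
      using that h mult_left_mono[of y 1 h] mult_left_mono[of "-1" y h] by auto
    then have x: "L \<le> m - h * y" "m - h * y \<le> B"
      using mh by linarith+
    then have "\<bar>poly p (m - h * y) - exp (- (m - h * y))\<bar> < \<delta>"
      using L(1) by (intro approx) auto
    moreover have "exp (- (m - h * y)) \<le> \<delta>"
      using x(1) unfolding L(2)[symmetric] by simp
    moreover have "0 < exp (- (m - h * y))"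
      by simp
    ultimately show ?thesis
      unfolding poly_q abs_less_iff abs_le_iff by linarith
  qed
  define y0 where "y0 = (B + L) / (B - L)"
  define u where "u = arcosh y0"
  have "1 \<le> y0"
    using L LB by (simp add: y0_def)
  then have u: "cosh u = y0" "0 \<le> u"
    by (simp_all add: u_def)
  have "m - h * y0 = 0"
    using h by (simp add: y0_def m_def h_def field_simps)
  then have "poly q y0 = poly p 0 - \<delta> / 2"
    by (simp add: poly_q)
  moreover have "1 - \<delta> < poly p 0"
    using approx[of 0] L LB by auto
  moreover have "\<bar>poly q y0\<bar> \<le> 3 * \<delta> / 2 * cosh (real (degree p) * u)"
    using abs_poly_le_chebyshev[OF deg_q \<open>1 \<le> y0\<close> q_bound]
    by (simp add: u(1)[symmetric] poly_chebyshev_cosh)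
  ultimately have "1 - 3 * \<delta> / 2 < 3 * \<delta> / 2 * cosh (real (degree p) * u)"
    by linarith
  from ln_le_of_cosh_lower_bound[OF \<delta> _ this] show ?thesis
    using u(2) by (simp add: L_def u_def y0_def mult.assoc)
qed

lemma sqrt_le_degree_of_exp_approx:
  fixes p :: "real poly" and \<delta> B :: real
  defines "L \<equiv> ln (1 / \<delta>)"
  assumes \<delta>: "0 < \<delta>" "\<delta> < 1/4" and LB: "L < B"
    and approx: "\<And>x. 0 \<le> x \<Longrightarrow> x \<le> B \<Longrightarrow> \<bar>poly p x - exp (- x)\<bar> < \<delta>"
  shows "sqrt ((B - L) * ln (1 / (2 * \<delta>))) / 2 \<le> real (degree p)"
proof -
  define b where "b = ln (1 / (2 * \<delta>))"
  define n where "n = real (degree p)"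
  define s where "s = 2 * sqrt (L / (B - L))"
  have L: "0 < L" and b: "0 < b"
    using \<delta> by (simp_all add: L_def b_def)
  have s: "0 \<le> s" "s^2 = 4 * L / (B - L)"
    using L LB by (simp_all add: s_def power_mult_distrib)
  have "(B + L) / (B - L) = 1 + s^2 / 2"
    using LB by (simp add: s field_simps)
  then have "arcosh ((B + L) / (B - L)) \<le> s"
    using arcosh_1_plus_square_div_2_le[OF s(1)] by simp
  then have "L + b \<le> 2 * n * s"
    using ln_le_degree_mult_arcosh[OF \<delta> _ approx] LB
    by (fastforce simp: L_def b_def n_def intro: order.trans mult_left_mono)
  have "4 * L * b \<le> (L + b)^2"
    using sum_squares_ge_zero[of "L - b" 0] by (simp add: power2_eq_square algebra_simps)
  also have "\<dots> \<le> (2 * n * s)^2"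
    using \<open>L + b \<le> 2 * n * s\<close> L b by (intro power_mono) auto
  also have "\<dots> = 4 * L * (4 * n^2 / (B - L))"
    by (simp add: power_mult_distrib s(2))
  finally have "b \<le> 4 * n^2 / (B - L)"
    by (rule mult_left_le_imp_le) (use L in simp)
  then have "(B - L) * b \<le> (2 * n)^2"
    using LB by (simp add: field_simps)
  then have "sqrt ((B - L) * b) \<le> 2 * n"
    by (rule real_le_lsqrt[rotated]) (simp add: n_def)
  then show ?thesis
    by (simp add: b_def n_def)
qed

lemma real_polynomial_function_imp_poly:
  fixes f :: "real \<Rightarrow> real"
  assumes "real_polynomial_function f"
  obtains p where "\<And>x. f x = poly p x"
proof -
  obtain a n where "f = (\<lambda>x. \<Sum>i\<le>n. a i * x ^ i)"
    using assms real_polynomial_function_iff_sum by blast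
  then have "f x = poly (\<Sum>i\<le>n. monom (a i) i) x" for x
    by (simp add: poly_sum poly_monom)
  then show ?thesis
    using that by blast
qed

lemma abs_poly_diff_le_SUP:
  fixes f :: "real \<Rightarrow> real" and p :: "real poly"
  assumes "compact S" "continuous_on S f" "x \<in> S"
  shows "\<bar>poly p x - f x\<bar> \<le> (SUP x\<in>S. \<bar>poly p x - f x\<bar>)"
proof -
  have "continuous_on S (\<lambda>x. \<bar>poly p x - f x\<bar>)"
    using assms(2) by (intro continuous_intros)
  then have "bounded ((\<lambda>x. \<bar>poly p x - f x\<bar>) ` S)"
    using assms(1) by (intro compact_imp_bounded compact_continuous_image)
  then show ?thesis
    using assms(3) by (intro cSUP_upper bounded_imp_bdd_above)
qed

lemma exists_nonconstant_poly_approx: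
  fixes f :: "real \<Rightarrow> real" and \<delta> B :: real
  assumes f: "continuous_on {0..B} f" and B: "0 \<le> B" and \<delta>: "0 < \<delta>"
  shows "\<exists>p :: real poly. 0 < degree p \<and> (SUP x\<in>{0..B}. \<bar>poly p x - f x\<bar>) < \<delta>"
proof -
  obtain g where g: "real_polynomial_function g" "\<And>x. x \<in> {0..B} \<Longrightarrow> \<bar>f x - g x\<bar> < \<delta> / 2"
    using Stone_Weierstrass_real_polynomial_function[OF compact_Icc f, of "\<delta> / 2"] \<delta> by auto
  obtain p\<^sub>0 where p\<^sub>0: "\<And>x. g x = poly p\<^sub>0 x"
    using real_polynomial_function_imp_poly[OF g(1)] by blast
  \<comment> \<open>Adding a small monomial of higher degree makes the approximant non-constant.\<close>
  define k where "k = Suc (degree p\<^sub>0)"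
  define \<epsilon> where "\<epsilon> = \<delta> / (4 * (B ^ k + 1))"
  define p where "p = p\<^sub>0 + monom \<epsilon> k"
  have \<epsilon>: "0 < \<epsilon>" "\<epsilon> * B ^ k \<le> \<delta> / 4"
  proof -
    have "0 \<le> B ^ k"
      using B by simp
    then show "0 < \<epsilon>" "\<epsilon> * B ^ k \<le> \<delta> / 4"
      using \<delta> by (auto simp: \<epsilon>_def field_simps)
  qed
  have "degree p = k"
    unfolding p_def using \<epsilon> by (subst degree_add_eq_right) (auto simp: degree_monom_eq k_def)
  moreover have "\<bar>poly p x - f x\<bar> \<le> 3 * \<delta> / 4" if x: "x \<in> {0..B}" for x
  proof -
    have "0 \<le> \<epsilon> * x ^ k" "\<epsilon> * x ^ k \<le> \<epsilon> * B ^ k"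
      using x \<epsilon> by (auto intro: mult_left_mono power_mono)
    moreover have "\<bar>f x - poly p\<^sub>0 x\<bar> < \<delta> / 2"
      using g(2)[OF x] p\<^sub>0 by simp
    ultimately show ?thesis
      using \<epsilon>(2) unfolding abs_le_iff abs_less_iff by (simp add: p_def poly_monom)
  qed
  then have "(SUP x\<in>{0..B}. \<bar>poly p x - f x\<bar>) \<le> 3 * \<delta> / 4"
    using B by (intro cSUP_least) auto
  ultimately show ?thesis
    using \<delta> by (intro exI[of _ p]) (auto simp: k_def)
qed

lemma approx_degree_attained:
  fixes f :: "real \<Rightarrow> real" and \<delta> B :: real
  assumes f: "continuous_on {0..B} f" and "0 \<le> B" "0 < \<delta>"
  obtains p :: "real poly" where "degree p = approx_degree B \<delta> f" "0 < degree p"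
    "\<And>x. x \<in> {0..B} \<Longrightarrow> \<bar>poly p x - f x\<bar> < \<delta>"
proof -
  have "\<exists>n p. degree p = n \<and> 0 < degree p \<and> (SUP x\<in>{0..B}. \<bar>poly p x - f x\<bar>) < \<delta>"
    using exists_nonconstant_poly_approx[OF assms] by blast
  from LeastI_ex[OF this] obtain p :: "real poly" where p: "degree p = approx_degree B \<delta> f"
    "0 < degree p" "(SUP x\<in>{0..B}. \<bar>poly p x - f x\<bar>) < \<delta>"
    unfolding approx_degree_def by blast
  have "\<bar>poly p x - f x\<bar> < \<delta>" if "x \<in> {0..B}" for x
    using abs_poly_diff_le_SUP[OF compact_Icc f that, of p] p(3) by linarith
  with p(1,2) show ?thesis
    using that by blast
qed

lemma approx_degree_exp_ge:
  fixes \<delta> B :: real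
  assumes \<delta>: "0 < \<delta>" "\<delta> < 1/4" and LB: "ln (1 / \<delta>) < B"
  shows "sqrt ((B - ln (1 / \<delta>)) * ln (1 / (2 * \<delta>))) / 2
    \<le> real (approx_degree B \<delta> (\<lambda>x. exp (- x)))"
proof -
  have "0 < ln (1 / \<delta>)"
    using \<delta> by simp
  then have B: "0 \<le> B"
    using LB by linarith
  have "continuous_on {0..B} (\<lambda>x. exp (- x :: real))"
    by (intro continuous_intros)
  from approx_degree_attained[OF this B \<delta>(1)]
  obtain p :: "real poly" where "degree p = approx_degree B \<delta> (\<lambda>x. exp (- x))"
    "\<And>x. x \<in> {0..B} \<Longrightarrow> \<bar>poly p x - exp (- x)\<bar> < \<delta>"
    by blast
  then show ?thesis
    using sqrt_le_degree_of_exp_approx[OF \<delta> LB, of p] by simp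
qed

theorem lemma4p6:
  fixes B \<delta> :: "nat \<Rightarrow> real"
  assumes "\<And>k. k \<ge> 1 \<Longrightarrow> 0 < \<delta> k \<and> \<delta> k < 1/4"
    and "\<And>k. k \<ge> 1 \<Longrightarrow> B k \<ge> 1"
    and "filterlim (\<lambda>k. B k / ln (1 / \<delta> k)) at_top sequentially"
  shows "\<exists>\<epsilon> :: nat \<Rightarrow> real. \<epsilon> \<longlonglongrightarrow> 0 \<and>
    (\<forall>\<^sub>F k in sequentially.
       real (approx_degree (B k) (\<delta> k) (\<lambda>x. exp (- x)))
         \<ge> (1/2 + \<epsilon> k) * sqrt (B k * ln (1 / (2 * \<delta> k))))"
proof -
  define L where "L k = ln (1 / \<delta> k)" for k
  define \<epsilon> where "\<epsilon> k = (sqrt (1 - L k / B k) - 1) / 2" for k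
  have "(\<lambda>k. L k / B k) \<longlonglongrightarrow> 0"
    using tendsto_inverse_0_at_top[OF assms(3)] by (simp add: L_def)
  then have "\<epsilon> \<longlonglongrightarrow> (sqrt (1 - 0) - 1) / 2"
    unfolding \<epsilon>_def by (intro tendsto_intros) auto
  moreover have "\<forall>\<^sub>F k in sequentially. 1 \<le> k \<and> 1 < B k / L k"
    using assms(3) eventually_ge_at_top unfolding L_def filterlim_at_top_dense
    by (auto intro: eventually_conj)
  then have "\<forall>\<^sub>F k in sequentially.
      (1/2 + \<epsilon> k) * sqrt (B k * ln (1 / (2 * \<delta> k)))
        \<le> real (approx_degree (B k) (\<delta> k) (\<lambda>x. exp (- x)))"
  proof (rule eventually_mono, elim conjE)
    fix k :: nat assume "1 \<le> k" "1 < B k / L k"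
    then have \<delta>: "0 < \<delta> k" "\<delta> k < 1/4" and B: "1 \<le> B k" and LB: "L k < B k"
      using assms(1,2)[of k] by (auto simp: L_def field_simps split: if_splits)
    have "1/2 + \<epsilon> k = sqrt (1 - L k / B k) / 2"
      by (simp add: \<epsilon>_def field_simps)
    then have "(1/2 + \<epsilon> k) * sqrt (B k * ln (1 / (2 * \<delta> k)))
        = sqrt ((1 - L k / B k) * (B k * ln (1 / (2 * \<delta> k)))) / 2"
      by (simp add: real_sqrt_mult)
    also have "\<dots> = sqrt ((B k - L k) * ln (1 / (2 * \<delta> k))) / 2"
      using B by (simp add: field_simps)
    finally show "(1/2 + \<epsilon> k) * sqrt (B k * ln (1 / (2 * \<delta> k)))
        \<le> real (approx_degree (B k) (\<delta> k) (\<lambda>x. exp (- x)))"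
      using approx_degree_exp_ge[OF \<delta>, of "B k"] LB unfolding L_def by linarith
  qed
  ultimately show ?thesis
    by auto
qed

end
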